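(* Let $E$ be a Euclidean vector space and $\nu$ a strongly irreducible and proximal probability measure on $\mathrm{GL}(E)$. Let $C,\beta>0$ be constants such that for all $f\in E^*\setminus\{0\}$, $v\in E\setminus\{0\}$, $n\in\mathbb{N}$ and $t\ge0$, $\mathbb{P}\big(\log\frac{\|f\|\|\overline\gamma_n\|\|v\|}{|f\overline\gamma_nv|}>t\big)\le Ce^{-\beta n}+\sum_{k\ge1}Ce^{-\beta k}N_*\nu(t/k,+\infty)$ where $\overline\gamma_n\sim\nu^{*n}$, and let $\xi^\infty_\nu$ be the unique $\nu$-stationary probability measure on $\mathrm{P}(E)$. Then (a) for every proper subspace $V\subsetneq E$ and every $0<r\le1$, $\xi^\infty_\nu(\mathcal{N}_r(V))\le\zeta^{C,\beta}_\nu(|\log r|,+\infty)$; (b) if $p>0$ and $N_*\nu$ has a finite $\mathrm{L}^p$ moment, there is a constant $C'$ such that for every proper subspace $V\subsetneq E$, $\int_{\mathrm{P}(E)}|\log\mathrm{dist}(\mathrm{P}(V),l)|^p\,d\xi^\infty_\nu(l)\le C'$; (c) if $p>0$ and $N_*\nu$ has a weak $\mathrm{L}^p$ moment, there is a constant $C'$ such that for every proper subspace $V\subsetneq E$ and every $0<r<1$, $\xi^\infty_\nu(\mathcal{N}_r(V))\le C'|\log r|^{-p}$.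
   Context: $E=\mathbb{R}^d$, $d\ge2$, Euclidean. $N(g)=\log(\|g\|\|g^{-1}\|)$ and $N_*\nu(a,+\infty)=\nu\{g:N(g)>a\}$. $\zeta^{C,\beta}_\nu$ is the probability on $\mathbb{R}_{\ge0}$ with $\zeta^{C,\beta}_\nu(t,+\infty)=\min\{1,\sum_{k\ge1}Ce^{-\beta k}N_*\nu(t/k,+\infty)\}$. $\mathrm{P}(E)$ has the metric $\mathrm{dist}([x],[y])=\|x\wedge y\|/(\|x\|\|y\|)$; $\mathrm{dist}(\mathrm{P}(V),l)=\min_{v\in V\setminus\{0\}}\mathrm{dist}([v],l)$ and $\mathcal{N}_r(V)=\{l:\mathrm{dist}(\mathrm{P}(V),l)<r\}$. $\xi$ is $\nu$-stationary if the law of $[gx]$ with $g\sim\nu$, $[x]\sim\xi$ independent equals $\xi$. A nonnegative variable $x$ has finite $\mathrm{L}^p$ moment if $\mathbb{E}(x^p)<\infty$, weak $\mathrm{L}^p$ moment if $\sup_tt^p\mathbb{P}(x>t)<\infty$. Proximal: $\nu^{*n}\{g:\rho_1(g)>\rho_2(g)\}>0$ for some $n$. Strongly irreducible: (a) for all $N\ge1$, $f_1,\dots,f_N\in E^*\setminus\{0\}$, $v\neq0$ there is $n$ with $\nu^{*n}\{g:\prod_if_igv\neq0\}>0$; (b) for all $N\ge1$, $f\neq0$, $v_1,\dots,v_N\neq0$ there is $n$ with $\nu^{*n}\{g:\prod_jfgv_j\neq0\}>0$. *)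

theory Defs
  imports "HOL-Probability.Probability" "HOL-Computational_Algebra.Polynomial"
    "HOL-Library.Multiset"
begin

type_synonym 'n mtx = "real^'n^'n"

definition opnorm :: "'n::finite mtx \<Rightarrow> real" where
  "opnorm g = onorm (\<lambda>x. g *v x)"

definition Nfun :: "'n::finite mtx \<Rightarrow> real" where
  "Nfun g = ln (opnorm g * opnorm (matrix_inv g))"

text \<open>N_* nu (a, +infinity) = nu{g : N(g) > a}\<close>
definition Ntail :: "'n::finite mtx measure \<Rightarrow> real \<Rightarrow> real" where
  "Ntail \<nu> a = measure \<nu> {g \<in> space \<nu>. Nfun g > a}"

definition zeta_tail :: "real \<Rightarrow> real \<Rightarrow> 'n::finite mtx measure \<Rightarrow> real \<Rightarrow> real" where
  "zeta_tail C \<beta> \<nu> t =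
     min 1 (\<Sum>k. C * exp (- \<beta> * real (Suc k)) * Ntail \<nu> (t / real (Suc k)))"

fun conv_pow :: "'n::finite mtx measure \<Rightarrow> nat \<Rightarrow> 'n mtx measure" where
  "conv_pow \<nu> 0 = return borel (mat 1)"
| "conv_pow \<nu> (Suc n) = distr (\<nu> \<Otimes>\<^sub>M conv_pow \<nu> n) borel (\<lambda>(g, h). g ** h)"

text \<open>Complex eigenvalues with multiplicity, moduli sorted decreasingly: rho_1 >= rho_2 >= ...\<close>
definition charpoly :: "'n::finite mtx \<Rightarrow> complex poly" where
  "charpoly g = det (\<chi> i j. (if i = j then [:0, 1:] else 0) - [:complex_of_real (g $ i $ j):])"

definition eigen_mset :: "'n::finite mtx \<Rightarrow> complex multiset" where
  "eigen_mset g = Abs_multiset (\<lambda>z. order z (charpoly g))"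

definition rho :: "'n::finite mtx \<Rightarrow> nat \<Rightarrow> real" where
  "rho g i = rev (sorted_list_of_multiset (image_mset cmod (eigen_mset g))) ! (i - 1)"

definition proximal :: "'n::finite mtx measure \<Rightarrow> bool" where
  "proximal \<nu> \<longleftrightarrow> (\<exists>n. measure (conv_pow \<nu> n) {g. rho g 1 > rho g 2} > 0)"

text \<open>Strong irreducibility, conditions (a) and (b); linear forms f in E^* are represented
  by vectors via the inner product.\<close>
definition strongly_irreducible :: "'n::finite mtx measure \<Rightarrow> bool" where
  "strongly_irreducible \<nu> \<longleftrightarrow>
     (\<forall>fs v. fs \<noteq> [] \<and> (\<forall>f\<in>set fs. f \<noteq> (0::real^'n)) \<and> v \<noteq> 0 \<longrightarrow>
        (\<exists>n. measure (conv_pow \<nu> n) {g. (\<Prod>f\<leftarrow>fs. f \<bullet> (g *v v)) \<noteq> 0} > 0)) \<and>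
     (\<forall>f vs. vs \<noteq> [] \<and> f \<noteq> (0::real^'n) \<and> (\<forall>v\<in>set vs. v \<noteq> 0) \<longrightarrow>
        (\<exists>n. measure (conv_pow \<nu> n) {g. (\<Prod>v\<leftarrow>vs. f \<bullet> (g *v v)) \<noteq> 0} > 0))"

text \<open>Projective space P(E): the set of lines, with the quotient sigma-algebra
  (which is the Borel sigma-algebra of its natural topology).\<close>
definition line :: "real^'n::finite \<Rightarrow> (real^'n) set" where
  "line x = span {x}"

definition Pspace :: "(real^'n::finite) set set" where
  "Pspace = {line x | x. x \<noteq> 0}"

definition proj_space :: "(real^'n::finite) set measure" where
  "proj_space = sigma Pspace {A. A \<subseteq> Pspace \<and> {x. x \<noteq> 0 \<and> line x \<in> A} \<in> sets borel}"

definition rep :: "(real^'n::finite) set \<Rightarrow> real^'n" where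
  "rep l = (SOME x. x \<noteq> 0 \<and> line x = l)"

text \<open>dist([x],[y]) = ||x wedge y|| / (||x|| ||y||), with ||x wedge y||^2 = ||x||^2||y||^2 - (x.y)^2\<close>
definition vdist :: "real^'n::finite \<Rightarrow> real^'n \<Rightarrow> real" where
  "vdist x y = sqrt ((norm x)\<^sup>2 * (norm y)\<^sup>2 - (x \<bullet> y)\<^sup>2) / (norm x * norm y)"

definition pdist :: "(real^'n::finite) set \<Rightarrow> (real^'n) set \<Rightarrow> real" where
  "pdist l m = vdist (rep l) (rep m)"

text \<open>dist(P(V), l) (= +infinity when P(V) is empty)\<close>
definition dist_PV :: "(real^'n::finite) set \<Rightarrow> (real^'n) set \<Rightarrow> ereal" where
  "dist_PV V l = (INF v\<in>V - {0}. ereal (pdist (line v) l))"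

definition nbhd :: "(real^'n::finite) set \<Rightarrow> real \<Rightarrow> (real^'n) set set" where
  "nbhd V r = {l \<in> Pspace. dist_PV V l < ereal r}"

text \<open>Action of GL(E) on P(E); the identity on (null) singular matrices so that it maps into P(E).\<close>
definition pact :: "'n::finite mtx \<Rightarrow> (real^'n) set \<Rightarrow> (real^'n) set" where
  "pact g l = (if invertible g then (\<lambda>x. g *v x) ` l else l)"

definition stationary :: "'n::finite mtx measure \<Rightarrow> (real^'n) set measure \<Rightarrow> bool" where
  "stationary \<nu> \<xi> \<longleftrightarrow> distr (\<nu> \<Otimes>\<^sub>M \<xi>) proj_space (\<lambda>(g, l). pact g l) = \<xi>"

definition prob_GL :: "'n::finite mtx measure \<Rightarrow> bool" where
  "prob_GL \<nu> \<longleftrightarrow> prob_space \<nu> \<and> sets \<nu> = sets borel \<and> (AE g in \<nu>. invertible g)"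

end

theory Submission
  imports Defs
begin

(* Stationarity of \<xi> under \<nu> passes to every convolution power, so
   \<xi>(A) = \<integral> \<nu>^n {g. g l \<in> A} d\<xi>(l) for all n. If f is orthogonal to V and g moves the line [v]
   into the r-neighbourhood of P(V), then |f g v| < r |f| |g| |v|, so the hypothesis bounds
   \<xi>(N_r(V)) by C exp(-\<beta> n) plus the zeta series at |ln r|; letting n tend to infinity gives (a).
   For (c) each term of the series is bounded with the weak moment. For (b),
   |ln d|^p is at most the number of j with d < exp(-j^(1/p)), so the integral is at most
   \<Sum>_j \<xi>(N_(exp(-j^(1/p)))(V)); after exchanging the two sums one uses
   \<Sum>_j N_*\<nu>(j^(1/p)/k, \<infinity>) \<le> 1 + k^p E[N^p]. *)

lemma sigma_algebra_proj_space:
  "sigma_algebra Pspace {A. A \<subseteq> Pspace \<and> {x::real^'n::finite. x \<noteq> 0 \<and> line x \<in> A} \<in> sets borel}"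
  (is "sigma_algebra _ ?S")
proof (subst sigma_algebra_iff2, intro conjI ballI allI impI)
  show "?S \<subseteq> Pow Pspace" "{} \<in> ?S" by auto
next
  fix A assume "A \<in> ?S"
  moreover have "{x. x \<noteq> 0 \<and> line x \<in> Pspace - A} = - {0} - {x. x \<noteq> 0 \<and> line x \<in> A}"
    by (auto simp: Pspace_def)
  ultimately show "Pspace - A \<in> ?S" by auto
next
  fix A :: "nat \<Rightarrow> _" assume "range A \<subseteq> ?S"
  then have "\<And>i. {x. x \<noteq> 0 \<and> line x \<in> A i} \<in> sets borel" "(\<Union>i. A i) \<subseteq> Pspace"
    by auto
  moreover have "{x. x \<noteq> 0 \<and> line x \<in> (\<Union>i. A i)} = (\<Union>i. {x. x \<noteq> 0 \<and> line x \<in> A i})"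
    by auto
  ultimately show "(\<Union>i. A i) \<in> ?S" by (simp only: mem_Collect_eq) auto
qed

lemma space_proj_space: "space proj_space = Pspace"
  unfolding proj_space_def by (rule sigma_algebra.space_measure_of_eq[OF sigma_algebra_proj_space])

lemma sets_proj_space:
  "sets proj_space = {A. A \<subseteq> Pspace \<and> {x::real^'n::finite. x \<noteq> 0 \<and> line x \<in> A} \<in> sets borel}"
  unfolding proj_space_def by (rule sigma_algebra.sets_measure_of_eq[OF sigma_algebra_proj_space])

lemma space_eq_Pspace: "sets X = sets proj_space \<Longrightarrow> space X = Pspace"
  using sets_eq_imp_space_eq space_proj_space by metis

lemma line_in_Pspace: "x \<noteq> 0 \<Longrightarrow> line x \<in> Pspace"
  unfolding Pspace_def by auto

lemma line_eq_range: "line x = range (\<lambda>c. c *\<^sub>R x)"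
  unfolding line_def by (rule span_singleton)

lemma line_scaleR:
  assumes "c \<noteq> 0"
  shows "line (c *\<^sub>R x) = line x"
proof -
  have "k *\<^sub>R x = (k / c) *\<^sub>R (c *\<^sub>R x)" for k
    using assms by simp
  then have "range (\<lambda>k. k *\<^sub>R x) \<subseteq> range (\<lambda>k. k *\<^sub>R (c *\<^sub>R x))"
    by blast
  moreover have "range (\<lambda>k. k *\<^sub>R (c *\<^sub>R x)) \<subseteq> range (\<lambda>k. k *\<^sub>R x)"
    by (intro image_subsetI) (metis rangeI scaleR_scaleR)
  ultimately show ?thesis unfolding line_eq_range by blast
qed

lemma line_eq_imp_scaleR:
  assumes "line y = line x" "y \<noteq> 0"
  obtains c where "c \<noteq> 0" "y = c *\<^sub>R x"
proof -
  have "y \<in> line x" using assms(1) span_base[of y "{y}"] by (simp add: line_def)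
  then obtain c where "y = c *\<^sub>R x" by (auto simp: line_eq_range)
  with assms(2) that show ?thesis by auto
qed

lemma rep_line:
  assumes "x \<noteq> 0"
  obtains c where "c \<noteq> 0" "rep (line x) = c *\<^sub>R x"
proof -
  have "\<exists>y. y \<noteq> 0 \<and> line y = line x" using assms by blast
  then have "rep (line x) \<noteq> 0 \<and> line (rep (line x)) = line x"
    unfolding rep_def by (rule someI_ex)
  then show ?thesis using line_eq_imp_scaleR that by blast
qed
lemma vdist_scaleR:
  assumes "c \<noteq> 0" "d \<noteq> 0"
  shows "vdist (c *\<^sub>R x) (d *\<^sub>R y) = vdist x y"
proof -
  have "(norm (c *\<^sub>R x))\<^sup>2 * (norm (d *\<^sub>R y))\<^sup>2 - ((c *\<^sub>R x) \<bullet> (d *\<^sub>R y))\<^sup>2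
     = (c * d)\<^sup>2 * ((norm x)\<^sup>2 * (norm y)\<^sup>2 - (x \<bullet> y)\<^sup>2)"
    by (simp add: power_mult_distrib algebra_simps)
  then have "sqrt ((norm (c *\<^sub>R x))\<^sup>2 * (norm (d *\<^sub>R y))\<^sup>2 - ((c *\<^sub>R x) \<bullet> (d *\<^sub>R y))\<^sup>2)
     = \<bar>c * d\<bar> * sqrt ((norm x)\<^sup>2 * (norm y)\<^sup>2 - (x \<bullet> y)\<^sup>2)"
    by (simp add: real_sqrt_mult)
  moreover have "norm (c *\<^sub>R x) * norm (d *\<^sub>R y) = \<bar>c * d\<bar> * (norm x * norm y)"
    by (simp add: abs_mult)
  ultimately show ?thesis
    unfolding vdist_def using assms by (simp only:) (simp add: abs_mult)
qed

lemma pdist_line: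
  assumes "x \<noteq> 0" "y \<noteq> 0"
  shows "pdist (line x) (line y) = vdist x y"
proof -
  obtain c where "c \<noteq> 0" "rep (line x) = c *\<^sub>R x" using rep_line[OF assms(1)] .
  moreover obtain d where "d \<noteq> 0" "rep (line y) = d *\<^sub>R y" using rep_line[OF assms(2)] .
  ultimately show ?thesis unfolding pdist_def by (simp add: vdist_scaleR)
qed

lemma pact_line:
  assumes "invertible g"
  shows "pact g (line x) = line (g *v x)"
proof -
  have "(\<lambda>y. g *v y) ` line x = line (g *v x)"
    unfolding line_def using span_linear_image[OF matrix_vector_mul_linear, of g "{x}"] by simp
  then show ?thesis using assms unfolding pact_def by simp
qed

lemma invertible_imp_matrix_vector_mult_nonzero:
  fixes g :: "real^'n::finite^'n"
  assumes "invertible g" "x \<noteq> 0"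
  shows "g *v x \<noteq> 0"
proof
  assume "g *v x = 0"
  then have "g *v x = g *v 0" by simp
  with injD[OF inj_matrix_vector_mult[OF assms(1)]] assms(2) show False by blast
qed

section \<open>A measurable choice of representatives\<close>

text \<open>\<^const>\<open>rep\<close> is an arbitrary choice and need not be measurable. Instead a line is
  represented by its unique vector whose first nonzero coordinate, in an arbitrary enumeration of
  the index type, is 1.\<close>

definition pivot :: "real^'n::finite \<Rightarrow> 'n \<Rightarrow> bool" where
  "pivot x i \<longleftrightarrow> x $ i \<noteq> 0 \<and>
     (\<forall>j. to_nat_on (UNIV :: 'n set) j < to_nat_on UNIV i \<longrightarrow> x $ j = 0)"

definition pivot_entry :: "real^'n::finite \<Rightarrow> real" where
  "pivot_entry x = (\<Sum>i\<in>UNIV. if pivot x i then x $ i else 0)"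

definition pivot_normalize :: "real^'n::finite \<Rightarrow> real^'n" where
  "pivot_normalize x = (1 / pivot_entry x) *\<^sub>R x"

definition proj_rep :: "(real^'n::finite) set \<Rightarrow> real^'n" where
  "proj_rep l = pivot_normalize (rep l)"

lemma pivot_unique:
  fixes x :: "real^'n::finite"
  assumes "pivot x i" "pivot x j"
  shows "i = j"
proof -
  have "inj (to_nat_on (UNIV :: 'n set))" by (simp add: inj_on_to_nat_on)
  then show ?thesis using assms unfolding pivot_def by (metis injD linorder_neqE_nat)
qed

lemma pivot_exists:
  fixes x :: "real^'n::finite"
  assumes "x \<noteq> 0"
  obtains i where "pivot x i"
proof -
  obtain k where "x $ k \<noteq> 0" using assms by (metis vec_eq_iff zero_index)
  then obtain i where "x $ i \<noteq> 0"
    "\<forall>j. x $ j \<noteq> 0 \<longrightarrow> to_nat_on (UNIV :: 'n set) i \<le> to_nat_on UNIV j"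
    using ex_has_least_nat[of "\<lambda>i. x $ i \<noteq> 0" k "to_nat_on UNIV"] by blast
  then show ?thesis using that unfolding pivot_def by (meson leD)
qed

lemma pivot_entry_eq: "pivot x i \<Longrightarrow> pivot_entry x = x $ i"
proof -
  assume "pivot x i"
  then have "pivot_entry x = (\<Sum>j\<in>UNIV. if j = i then x $ j else 0)"
    unfolding pivot_entry_def by (intro sum.cong) (auto dest: pivot_unique)
  then show ?thesis by simp
qed

lemma pivot_entry_nonzero:
  assumes "x \<noteq> 0"
  shows "pivot_entry x \<noteq> 0"
proof -
  obtain i where "pivot x i" using pivot_exists[OF assms] .
  then show ?thesis by (simp add: pivot_entry_eq pivot_def)
qed

lemma pivot_entry_scaleR: "c \<noteq> 0 \<Longrightarrow> pivot_entry (c *\<^sub>R x) = c * pivot_entry x"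
  unfolding pivot_entry_def pivot_def by (simp add: sum_distrib_left if_distrib cong: if_cong)

lemma pivot_normalize_scaleR: "c \<noteq> 0 \<Longrightarrow> pivot_normalize (c *\<^sub>R x) = pivot_normalize x"
  unfolding pivot_normalize_def by (simp add: pivot_entry_scaleR)

lemma pivot_normalize_nonzero: "x \<noteq> 0 \<Longrightarrow> pivot_normalize x \<noteq> 0"
  unfolding pivot_normalize_def using pivot_entry_nonzero by simp

lemma line_pivot_normalize:
  assumes "x \<noteq> 0"
  shows "line (pivot_normalize x) = line x"
proof -
  have "1 / pivot_entry x \<noteq> 0" using pivot_entry_nonzero[OF assms] by simp
  then show ?thesis unfolding pivot_normalize_def by (rule line_scaleR)
qed

lemma proj_rep_line:
  assumes "x \<noteq> 0"
  shows "proj_rep (line x) = pivot_normalize x"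
proof -
  obtain c where "c \<noteq> 0" "rep (line x) = c *\<^sub>R x" using rep_line[OF assms] .
  then show ?thesis unfolding proj_rep_def by (simp add: pivot_normalize_scaleR)
qed

lemma proj_rep_in_Pspace:
  assumes "l \<in> Pspace"
  shows "proj_rep l \<noteq> 0" "line (proj_rep l) = l"
proof -
  obtain x where "x \<noteq> 0" "l = line x" using assms unfolding Pspace_def by auto
  then show "proj_rep l \<noteq> 0" "line (proj_rep l) = l"
    by (simp_all add: proj_rep_line pivot_normalize_nonzero line_pivot_normalize)
qed

lemma sets_pivot: "{x::real^'n::finite. pivot x i} \<in> sets borel"
proof -
  have "{x::real^'n. pivot x i} =
      {x. x $ i \<noteq> 0} \<inter> (\<Inter>j\<in>{j. to_nat_on UNIV j < to_nat_on UNIV i}. {x. x $ j = 0})"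
    unfolding pivot_def by auto
  then show ?thesis by simp
qed

lemma borel_measurable_pivot_normalize: "pivot_normalize \<in> borel_measurable borel"
proof -
  have "pivot_entry \<in> borel_measurable (borel :: (real^'n::finite) measure)"
    unfolding pivot_entry_def using sets_pivot
    by (intro borel_measurable_sum measurable_If) auto
  then show ?thesis unfolding pivot_normalize_def by measurable
qed

lemma measurable_proj_rep [measurable]:
  "proj_rep \<in> proj_space \<rightarrow>\<^sub>M (borel :: (real^'n::finite) measure)"
proof (rule measurableI)
  fix B :: "(real^'n) set" assume "B \<in> sets borel"
  then have "pivot_normalize -` B \<in> sets borel"
    using measurable_sets[OF borel_measurable_pivot_normalize] by simp
  moreover have "{x. x \<noteq> 0 \<and> line x \<in> proj_rep -` B \<inter> Pspace} = - {0} \<inter> pivot_normalize -` B"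
    using proj_rep_line line_in_Pspace by auto
  ultimately have "{x. x \<noteq> 0 \<and> line x \<in> proj_rep -` B \<inter> Pspace} \<in> sets borel"
    by auto
  then show "proj_rep -` B \<inter> space proj_space \<in> sets proj_space"
    unfolding sets_proj_space space_proj_space by blast
qed simp

text \<open>The line through a vector, with the junk value \<^term>\<open>line 1\<close> at \<^term>\<open>0\<close> so that
  it maps into \<^const>\<open>Pspace\<close>.\<close>

definition proj_line :: "real^'n::finite \<Rightarrow> (real^'n) set" where
  "proj_line x = (if x = 0 then line 1 else line x)"

lemma proj_line_in_Pspace: "proj_line x \<in> Pspace"
  unfolding proj_line_def by (auto intro: line_in_Pspace)

lemma measurable_proj_line [measurable]:
  "proj_line \<in> (borel :: (real^'n::finite) measure) \<rightarrow>\<^sub>M proj_space"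
proof (rule measurableI)
  fix A :: "(real^'n) set set" assume "A \<in> sets proj_space"
  then have "{x. x \<noteq> 0 \<and> line x \<in> A} \<in> sets borel" unfolding sets_proj_space by auto
  moreover have "proj_line -` A \<inter> space borel =
      {x. x \<noteq> 0 \<and> line x \<in> A} \<union> (if line 1 \<in> A then {0} else {})"
    unfolding proj_line_def by (auto split: if_splits)
  ultimately show "proj_line -` A \<inter> space borel \<in> sets borel" by auto
qed (simp add: proj_line_in_Pspace space_proj_space)

lemma continuous_on_det [continuous_intros]:
  "continuous_on S f \<Longrightarrow> continuous_on S (\<lambda>x. det (f x :: real^'n::finite^'n))"
  unfolding det_def by (intro continuous_intros)

lemma borel_measurable_det [measurable]:
  "(det :: real^'n::finite^'n \<Rightarrow> real) \<in> borel_measurable borel"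
  by (rule borel_measurable_continuous_onI) (intro continuous_intros)

lemma sets_invertible [measurable]: "{g::real^'n::finite^'n. invertible g} \<in> sets borel"
proof -
  have "{g::real^'n^'n. invertible g} = det -` (- {0})" by (auto simp: invertible_det_nz)
  then show ?thesis using measurable_sets[OF borel_measurable_det, of "- {0}"] by auto
qed

lemma pred_invertible [measurable]:
  "Measurable.pred borel (invertible :: real^'n::finite^'n \<Rightarrow> bool)"
  using sets_invertible by (simp add: pred_def)

lemma measurable_matrix_mult_borel [measurable]:
  "(\<lambda>(g, h). g ** h) \<in> (borel :: (real^'n::finite^'n) measure) \<Otimes>\<^sub>M borel \<rightarrow>\<^sub>M borel"
  unfolding borel_prod case_prod_beta'
  by (rule borel_measurable_continuous_onI) (unfold matrix_matrix_mult_def, intro continuous_intros)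

lemma measurable_matrix_vector_mult [measurable]:
  "(\<lambda>(g, x). g *v x) \<in> (borel :: (real^'n::finite^'n) measure) \<Otimes>\<^sub>M borel \<rightarrow>\<^sub>M borel"
  unfolding borel_prod case_prod_beta'
  by (rule borel_measurable_continuous_onI) (unfold matrix_vector_mult_def, intro continuous_intros)

lemma opnorm_le: "opnorm (g::real^'n::finite^'n) \<le> real CARD('n) * real CARD('n) * norm g"
  unfolding opnorm_def
proof (rule onorm_le_matrix_component)
  fix i j
  have "\<bar>g $ i $ j\<bar> \<le> norm (g $ i)" by (rule component_le_norm_cart)
  also have "\<dots> \<le> norm g" by (rule Finite_Cartesian_Product.norm_nth_le)
  finally show "\<bar>g $ i $ j\<bar> \<le> norm g" .
qed

lemma continuous_on_opnorm: "continuous_on UNIV (opnorm :: real^'n::finite^'n \<Rightarrow> real)"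
proof (rule lipschitz_on_continuous_on[OF lipschitz_onI])
  let ?K = "real CARD('n) * real CARD('n)"
  have tri: "opnorm g \<le> opnorm h + ?K * norm (g - h)" for g h :: "real^'n^'n"
  proof -
    have "opnorm g = onorm (\<lambda>x. (g - h) *v x + h *v x)"
      unfolding opnorm_def by (simp add: matrix_vector_mult_diff_rdistrib)
    also have "\<dots> \<le> opnorm (g - h) + opnorm h"
      unfolding opnorm_def by (rule onorm_triangle) auto
    finally show ?thesis using opnorm_le[of "g - h"] by linarith
  qed
  fix g h :: "real^'n^'n"
  show "dist (opnorm g) (opnorm h) \<le> ?K * dist g h"
    using tri[of g h] tri[of h g]
    by (simp add: dist_real_def dist_norm norm_minus_commute abs_le_iff)
qed simp

lemma borel_measurable_opnorm [measurable]:
  "(opnorm :: real^'n::finite^'n \<Rightarrow> real) \<in> borel_measurable borel"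
  by (rule borel_measurable_continuous_onI[OF continuous_on_opnorm])
 
lemma matrix_inv_right:
  fixes g :: "real^'n::finite^'n"
  assumes "invertible g"
  shows "g ** matrix_inv g = mat 1"
  using assms unfolding invertible_def matrix_inv_def by (rule someI2_ex) simp

lemma matrix_inv_cramer:
  fixes g :: "real^'n::finite^'n"
  assumes "invertible g"
  shows "matrix_inv g = (\<chi> k j. det (\<chi> a b. if b = k then axis j 1 $ a else g $ a $ b) / det g)"
proof -
  have "g *v column j (matrix_inv g) = axis j 1" for j
    using matrix_inv_right[OF assms]
    by (simp add: matrix_vector_mult_basis[symmetric] matrix_vector_mul_assoc)
  then have "column j (matrix_inv g)
      = (\<chi> k. det (\<chi> a b. if b = k then axis j 1 $ a else g $ a $ b) / det g)" for j
    using assms by (simp add: cramer invertible_det_nz)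
  then show ?thesis by (simp add: vec_eq_iff column_def)
qed

lemma matrix_inv_not_invertible:
  fixes g :: "real^'n::finite^'n"
  assumes "\<not> invertible g"
  shows "matrix_inv g = (SOME h. False)"
proof -
  have "(\<lambda>h. g ** h = mat 1 \<and> h ** g = mat 1) = (\<lambda>h. False)"
    using assms unfolding invertible_def by auto
  then show ?thesis unfolding matrix_inv_def by simp
qed

lemma borel_measurable_matrix_inv [measurable]:
  "(matrix_inv :: real^'n::finite^'n \<Rightarrow> _) \<in> borel_measurable borel"
proof -
  let ?inv = "\<lambda>g::real^'n^'n. \<chi> k j. det (\<chi> a b. if b = k then axis j 1 $ a else g $ a $ b) / det g"
  have "continuous_on S (\<lambda>g::real^'n^'n. if b = k then c else g $ a $ b)" for S a b k c
    by (cases "b = k") (auto intro!: continuous_on_component continuous_on_id)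
  then have "continuous_on {g. invertible g} ?inv"
    by (intro continuous_intros) (auto simp: invertible_det_nz)
  then have "(\<lambda>g. if g \<in> {g. invertible g} then ?inv g else (SOME h. False))
      \<in> borel_measurable borel"
    by (intro borel_measurable_continuous_on_if sets_invertible continuous_on_const)
  also have "(\<lambda>g. if g \<in> {g. invertible g} then ?inv g else (SOME h. False)) = matrix_inv"
    by (auto simp: matrix_inv_cramer matrix_inv_not_invertible)
  finally show ?thesis .
qed

lemma borel_measurable_Nfun [measurable]:
  "(Nfun :: real^'n::finite^'n \<Rightarrow> real) \<in> borel_measurable borel"
  unfolding Nfun_def by measurable

lemma measurable_matrix_mult:
  fixes M N :: "(real^'n::finite^'n) measure"
  assumes "sets M = sets borel" "sets N = sets borel"
  shows "(\<lambda>(g, h). g ** h) \<in> M \<Otimes>\<^sub>M N \<rightarrow>\<^sub>M borel"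
  using measurable_matrix_mult_borel
  by (subst measurable_cong_sets[OF sets_pair_measure_cong[OF assms] refl])

section \<open>Convolution powers\<close>

lemma sets_conv_pow [measurable_cong]: "sets (conv_pow \<nu> n) = sets borel"
  by (cases n) auto

lemma prob_space_conv_pow:
  fixes \<nu> :: "(real^'n::finite^'n) measure"
  assumes "prob_space \<nu>" "sets \<nu> = sets borel"
  shows "prob_space (conv_pow \<nu> n)"
proof (induction n)
  case (Suc n)
  then show ?case
    using prob_space.prob_space_distr[OF prob_space_pair[OF assms(1) Suc]
        measurable_matrix_mult[OF assms(2) sets_conv_pow]]
    by simp
qed (simp add: prob_space_return)

lemma AE_conv_pow_invertible:
  fixes \<nu> :: "(real^'n::finite^'n) measure"
  assumes "prob_GL \<nu>"
  shows "AE g in conv_pow \<nu> n. invertible g"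
proof (induction n)
  case 0
  have "invertible (mat 1 :: real^'n^'n)"
    unfolding invertible_def by (intro exI[of _ "mat 1"]) simp
  then have "AE g in return borel (mat 1 :: real^'n^'n). invertible g"
    using pred_invertible by (subst AE_return) auto
  then show ?case unfolding conv_pow.simps(1) .
next
  case (Suc n)
  have \<nu>: "prob_space \<nu>" "sets \<nu> = sets borel" "AE g in \<nu>. invertible g"
    using assms unfolding prob_GL_def by auto
  interpret pair_prob_space \<nu> "conv_pow \<nu> n"
    using \<nu> prob_space_conv_pow[OF \<nu>(1,2), of n]
    by (simp add: pair_prob_space_def pair_sigma_finite_def prob_space_imp_sigma_finite)
  have "AE p in \<nu> \<Otimes>\<^sub>M conv_pow \<nu> n. invertible (fst p ** snd p)"
  proof (rule AE_pair_measure)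
    show "{p \<in> space (\<nu> \<Otimes>\<^sub>M conv_pow \<nu> n). invertible (fst p ** snd p)}
        \<in> sets (\<nu> \<Otimes>\<^sub>M conv_pow \<nu> n)"
      using \<nu>(2) by measurable
    show "AE g in \<nu>. AE h in conv_pow \<nu> n. invertible (fst (g, h) ** snd (g, h))"
      using \<nu>(3)
    proof (rule AE_mp[OF _ AE_I2], intro impI)
      fix g :: "real^'n^'n" assume "invertible g"
      then show "AE h in conv_pow \<nu> n. invertible (fst (g, h) ** snd (g, h))"
        using Suc by (auto elim!: AE_mp intro: invertible_mult)
    qed
  qed
  moreover have "{g \<in> space borel. invertible g} \<in> sets (borel :: (real^'n^'n) measure)"
    using sets_invertible by simp
  ultimately show ?case
    unfolding conv_pow.simps(2)
    by (subst AE_distr_iff[OF measurable_matrix_mult[OF \<nu>(2) sets_conv_pow]])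
      (simp_all add: case_prod_beta')
qed

lemma pact_mat_1: "pact (mat 1) l = l"
  by (simp add: pact_def invertible_def exI[of _ "mat 1"])

lemma pact_mult:
  assumes "invertible g" "invertible h"
  shows "pact (g ** h) l = pact g (pact h l)"
  using assms invertible_mult[OF assms]
  by (simp add: pact_def image_image matrix_vector_mul_assoc)

lemma pact_eq_proj_line:
  assumes "invertible g" "l \<in> Pspace"
  shows "pact g l = proj_line (g *v proj_rep l)"
proof -
  have "pact g l = line (g *v proj_rep l)"
    using pact_line[OF assms(1)] proj_rep_in_Pspace[OF assms(2)] by metis
  then show ?thesis
    using invertible_imp_matrix_vector_mult_nonzero[OF assms(1) proj_rep_in_Pspace(1)[OF assms(2)]]
    by (simp add: proj_line_def)
qed

lemma measurable_pact [measurable]: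
  "(\<lambda>(g, l). pact g l) \<in> (borel :: (real^'n::finite^'n) measure) \<Otimes>\<^sub>M proj_space \<rightarrow>\<^sub>M proj_space"
proof -
  let ?M = "(borel :: (real^'n^'n) measure) \<Otimes>\<^sub>M proj_space"
  have "(\<lambda>p. if invertible (fst p) then proj_line (fst p *v proj_rep (snd p)) else snd p)
      \<in> ?M \<rightarrow>\<^sub>M proj_space"
    by measurable
  moreover have "(\<lambda>(g, l). pact g l) p =
      (if invertible (fst p) then proj_line (fst p *v proj_rep (snd p)) else snd p)"
    if p: "p \<in> space ?M" for p
  proof -
    obtain g l where "p = (g, l)" "l \<in> Pspace"
      using p by (auto simp: space_pair_measure space_proj_space)
    then show ?thesis by (cases "invertible g") (simp add: pact_eq_proj_line, simp add: pact_def)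
  qed
  ultimately show ?thesis using measurable_cong[of ?M "\<lambda>(g, l). pact g l"] by simp
qed

lemma measurable_pact_cong_sets:
  assumes "sets M = sets borel" "sets X = sets proj_space"
  shows "(\<lambda>(g, l). pact g l) \<in> M \<Otimes>\<^sub>M X \<rightarrow>\<^sub>M proj_space"
  using measurable_pact by (subst measurable_cong_sets[OF sets_pair_measure_cong[OF assms] refl])

lemma nn_integral_distr_pact:
  fixes M :: "(real^'n::finite^'n) measure" and X :: "(real^'n) set measure"
  assumes "sigma_finite_measure M" "sigma_finite_measure X"
    and "sets M = sets borel" "sets X = sets proj_space"
    and f: "f \<in> borel_measurable proj_space"
  shows "(\<integral>\<^sup>+ m. f m \<partial>distr (M \<Otimes>\<^sub>M X) proj_space (\<lambda>(g, l). pact g l))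
    = (\<integral>\<^sup>+ l. \<integral>\<^sup>+ g. f (pact g l) \<partial>M \<partial>X)"
proof -
  interpret pair_sigma_finite M X using assms(1,2) by (simp add: pair_sigma_finite_def)
  have pact: "(\<lambda>(g, l). pact g l) \<in> M \<Otimes>\<^sub>M X \<rightarrow>\<^sub>M proj_space"
    by (rule measurable_pact_cong_sets[OF assms(3,4)])
  have "(\<integral>\<^sup>+ m. f m \<partial>distr (M \<Otimes>\<^sub>M X) proj_space (\<lambda>(g, l). pact g l))
      = (\<integral>\<^sup>+ p. f (case p of (g, l) \<Rightarrow> pact g l) \<partial>(M \<Otimes>\<^sub>M X))"
    by (rule nn_integral_distr[OF pact]) (simp add: f)
  also have "\<dots> = (\<integral>\<^sup>+ l. \<integral>\<^sup>+ g. f (pact g l) \<partial>M \<partial>X)"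
    using nn_integral_snd[OF measurable_compose[OF pact f]] by simp
  finally show ?thesis .
qed

lemma nn_integral_pact_stationary:
  fixes \<nu> :: "(real^'n::finite^'n) measure" and \<xi> :: "(real^'n) set measure"
  assumes "prob_GL \<nu>" "prob_space \<xi>" "sets \<xi> = sets proj_space" "stationary \<nu> \<xi>"
    and "f \<in> borel_measurable proj_space"
  shows "(\<integral>\<^sup>+ l. \<integral>\<^sup>+ g. f (pact g l) \<partial>\<nu> \<partial>\<xi>) = (\<integral>\<^sup>+ l. f l \<partial>\<xi>)"
  using assms nn_integral_distr_pact[of \<nu> \<xi> f]
  by (simp add: prob_GL_def stationary_def prob_space_imp_sigma_finite)

lemma nn_integral_conv_pow_Suc_pact:
  fixes \<nu> :: "(real^'n::finite^'n) measure"
  assumes \<nu>: "prob_GL \<nu>" and l: "l \<in> Pspace" and f: "f \<in> borel_measurable proj_space"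
  shows "(\<integral>\<^sup>+ g. f (pact g l) \<partial>conv_pow \<nu> (Suc n))
    = (\<integral>\<^sup>+ h. \<integral>\<^sup>+ g. f (pact g (pact h l)) \<partial>\<nu> \<partial>conv_pow \<nu> n)"
proof -
  have p\<nu>: "prob_space \<nu>" "sets \<nu> = sets borel" "AE g in \<nu>. invertible g"
    using \<nu> unfolding prob_GL_def by auto
  interpret pair_sigma_finite \<nu> "conv_pow \<nu> n"
    using p\<nu> prob_space_conv_pow[OF p\<nu>(1,2), of n]
    by (simp add: pair_sigma_finite_def prob_space_imp_sigma_finite)
  note [measurable_cong] = p\<nu>(2)
  have [measurable]: "l \<in> space proj_space" using l by (simp add: space_proj_space)
  have "(\<integral>\<^sup>+ g. f (pact g l) \<partial>conv_pow \<nu> (Suc n))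
      = (\<integral>\<^sup>+ p. f (pact (fst p ** snd p) l) \<partial>(\<nu> \<Otimes>\<^sub>M conv_pow \<nu> n))"
    using f by (simp add: nn_integral_distr measurable_matrix_mult[OF p\<nu>(2) sets_conv_pow]
        case_prod_beta')
  also have "\<dots> = (\<integral>\<^sup>+ h. \<integral>\<^sup>+ g. f (pact (g ** h) l) \<partial>\<nu> \<partial>conv_pow \<nu> n)"
    using f by (subst nn_integral_snd[symmetric]) simp_all
  also have "\<dots> = (\<integral>\<^sup>+ h. \<integral>\<^sup>+ g. f (pact g (pact h l)) \<partial>\<nu> \<partial>conv_pow \<nu> n)"
    using AE_conv_pow_invertible[OF \<nu>, of n]
  proof (rule nn_integral_cong_AE[OF AE_mp[OF _ AE_I2]], intro impI)
    fix h :: "real^'n^'n" assume "invertible h"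
    with p\<nu>(3) show "(\<integral>\<^sup>+ g. f (pact (g ** h) l) \<partial>\<nu>) = (\<integral>\<^sup>+ g. f (pact g (pact h l)) \<partial>\<nu>)"
      by (intro nn_integral_cong_AE) (auto elim!: AE_mp simp: pact_mult)
  qed
  finally show ?thesis .
qed

lemma nn_integral_conv_pow_stationary:
  fixes \<nu> :: "(real^'n::finite^'n) measure" and \<xi> :: "(real^'n) set measure"
  assumes \<nu>: "prob_GL \<nu>" and \<xi>: "prob_space \<xi>" "sets \<xi> = sets proj_space" "stationary \<nu> \<xi>"
    and f: "f \<in> borel_measurable proj_space"
  shows "(\<integral>\<^sup>+ l. \<integral>\<^sup>+ g. f (pact g l) \<partial>conv_pow \<nu> n \<partial>\<xi>) = (\<integral>\<^sup>+ l. f l \<partial>\<xi>)"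
  using f
proof (induction n arbitrary: f)
  case 0
  have "(\<integral>\<^sup>+ g. f (pact g l) \<partial>conv_pow \<nu> 0) = f l" if "l \<in> space \<xi>" for l
  proof -
    have "l \<in> space proj_space" using that space_eq_Pspace[OF \<xi>(2)] by (simp add: space_proj_space)
    then have "(\<lambda>g. f (pact g l)) \<in> borel_measurable borel" using "0" by measurable
    then show ?thesis by (simp add: nn_integral_return pact_mat_1)
  qed
  then show ?case by (simp cong: nn_integral_cong)
next
  case (Suc n)
  interpret \<nu>: prob_space \<nu> using \<nu> unfolding prob_GL_def by blast
  have [measurable_cong]: "sets \<nu> = sets borel" using \<nu> unfolding prob_GL_def by blast
  define F where "F m = (\<integral>\<^sup>+ g. f (pact g m) \<partial>\<nu>)" for m
  have F: "F \<in> borel_measurable proj_space"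
    unfolding F_def using Suc.prems by measurable
  have "(\<integral>\<^sup>+ l. \<integral>\<^sup>+ g. f (pact g l) \<partial>conv_pow \<nu> (Suc n) \<partial>\<xi>)
      = (\<integral>\<^sup>+ l. \<integral>\<^sup>+ h. F (pact h l) \<partial>conv_pow \<nu> n \<partial>\<xi>)"
    unfolding F_def using nn_integral_conv_pow_Suc_pact[OF \<nu> _ Suc.prems] space_eq_Pspace[OF \<xi>(2)]
    by (intro nn_integral_cong) simp
  also have "\<dots> = (\<integral>\<^sup>+ l. F l \<partial>\<xi>)" by (rule Suc.IH[OF F])
  also have "\<dots> = (\<integral>\<^sup>+ l. f l \<partial>\<xi>)"
    unfolding F_def by (rule nn_integral_pact_stationary[OF \<nu> \<xi> Suc.prems])
  finally show ?case .
qed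

lemma vdist_nonneg: "0 \<le> vdist x y"
proof -
  have "\<bar>x \<bullet> y\<bar> \<le> norm x * norm y" by (rule Cauchy_Schwarz_ineq2)
  then have "(x \<bullet> y)\<^sup>2 \<le> (norm x * norm y)\<^sup>2" by (metis abs_ge_zero power2_abs power_mono)
  then show ?thesis unfolding vdist_def by (simp add: power_mult_distrib)
qed

lemma vdist_le_1: "vdist x y \<le> 1"
proof (cases "x = 0 \<or> y = 0")
  case False
  then have pos: "norm x * norm y > 0" by simp
  have "sqrt ((norm x)\<^sup>2 * (norm y)\<^sup>2 - (x \<bullet> y)\<^sup>2) \<le> sqrt ((norm x * norm y)\<^sup>2)"
    by (rule real_sqrt_le_mono) (simp add: power_mult_distrib)
  with pos show ?thesis unfolding vdist_def by simp
qed (auto simp: vdist_def)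

text \<open>\<^term>\<open>norm y * vdist w y\<close> is the distance from \<^term>\<open>y\<close> to the line through
  \<^term>\<open>w\<close>, and a form vanishing on \<^term>\<open>w\<close> only sees that distance.\<close>

lemma abs_inner_le_vdist:
  fixes f w y :: "real^'n::finite"
  assumes "f \<bullet> w = 0" "w \<noteq> 0" "y \<noteq> 0"
  shows "\<bar>f \<bullet> y\<bar> \<le> norm f * (norm y * vdist w y)"
proof -
  define z where "z = y - ((w \<bullet> y) / (norm w)\<^sup>2) *\<^sub>R w"
  have nw: "norm w > 0" using assms(2) by simp
  have "(norm z)\<^sup>2 = y \<bullet> y - 2 * ((w \<bullet> y) / (norm w)\<^sup>2) * (w \<bullet> y)
      + ((w \<bullet> y) / (norm w)\<^sup>2)\<^sup>2 * (w \<bullet> w)"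
    unfolding z_def power2_norm_eq_inner by (simp add: algebra_simps inner_commute power2_eq_square)
  also have "\<dots> = (norm y)\<^sup>2 - (w \<bullet> y)\<^sup>2 / (norm w)\<^sup>2"
    using nw by (simp add: power2_norm_eq_inner[symmetric] field_simps power2_eq_square)
  finally have "(norm w * norm z)\<^sup>2 = (norm w)\<^sup>2 * (norm y)\<^sup>2 - (w \<bullet> y)\<^sup>2"
    using nw by (simp add: power_mult_distrib field_simps)
  then have "sqrt ((norm w)\<^sup>2 * (norm y)\<^sup>2 - (w \<bullet> y)\<^sup>2) = norm w * norm z"
    by (metis abs_of_nonneg norm_ge_zero real_sqrt_abs zero_le_mult_iff)
  then have "norm y * vdist w y = norm z"
    using nw assms(3) unfolding vdist_def by (simp add: field_simps)
  moreover have "f \<bullet> y = f \<bullet> z"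
    unfolding z_def using assms(1) by (simp add: inner_diff_right)
  ultimately show ?thesis using Cauchy_Schwarz_ineq2[of f z] by simp
qed

lemma mem_nbhd_iff:
  "l \<in> nbhd V r \<longleftrightarrow> l \<in> Pspace \<and> (\<exists>v\<in>V - {0}. pdist (line v) l < r)"
  unfolding nbhd_def dist_PV_def by (simp add: INF_less_iff)

lemma sets_nbhd: "nbhd V r \<in> sets (proj_space :: (real^'n::finite) set measure)"
proof -
  have cont: "continuous_on (- {0}) (vdist v)" if "v \<noteq> 0" for v :: "real^'n"
    unfolding vdist_def using that by (intro continuous_intros) auto
  have "{x. x \<noteq> 0 \<and> line x \<in> nbhd V r} = (\<Union>v\<in>V - {0}. - {0} \<inter> vdist v -` {..<r})"
    by (auto simp: mem_nbhd_iff line_in_Pspace pdist_line)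
  also have "open \<dots>"
    using cont by (intro open_UN ballI continuous_open_preimage) auto
  finally have "{x. x \<noteq> 0 \<and> line x \<in> nbhd V r} \<in> sets borel" by simp
  moreover have "nbhd V r \<subseteq> Pspace" unfolding nbhd_def by auto
  ultimately show ?thesis unfolding sets_proj_space by simp
qed

definition small_coeff :: "real^'n::finite \<Rightarrow> real^'n \<Rightarrow> real \<Rightarrow> (real^'n^'n) set" where
  "small_coeff f v t =
     {g. f \<bullet> (g *v v) = 0 \<or> ln (norm f * opnorm g * norm v / \<bar>f \<bullet> (g *v v)\<bar>) > t}"

lemma sets_small_coeff [measurable]: "small_coeff f v t \<in> sets borel"
  unfolding small_coeff_def by measurable

lemma pact_in_nbhd_imp_small_coeff:
  fixes f v :: "real^'n::finite" and g :: "real^'n^'n"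
  assumes "\<And>w. w \<in> V \<Longrightarrow> f \<bullet> w = 0" "f \<noteq> 0" "0 < r" "r \<le> 1" "v \<noteq> 0" "invertible g"
    and "pact g (line v) \<in> nbhd V r"
  shows "g \<in> small_coeff f v \<bar>ln r\<bar>"
proof (cases "f \<bullet> (g *v v) = 0")
  case False
  let ?y = "g *v v"
  have y: "?y \<noteq> 0" by (rule invertible_imp_matrix_vector_mult_nonzero[OF assms(6,5)])
  obtain w where w: "w \<in> V" "w \<noteq> 0" "pdist (line w) (line ?y) < r"
    using assms(7) pact_line[OF assms(6)] unfolding mem_nbhd_iff by auto
  have "\<bar>f \<bullet> ?y\<bar> \<le> norm f * (norm ?y * vdist w ?y)"
    by (rule abs_inner_le_vdist[OF assms(1)[OF w(1)] w(2) y])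
  also have "\<dots> < norm f * (norm ?y * r)"
    using w(3) pdist_line[OF w(2) y] assms(2) y by (intro mult_strict_left_mono) auto
  also have "\<dots> \<le> norm f * (opnorm g * norm v * r)"
    using onorm[of "\<lambda>x. g *v x" v] assms(3) by (intro mult_left_mono) (auto simp: opnorm_def)
  finally have "1 / r < norm f * opnorm g * norm v / \<bar>f \<bullet> ?y\<bar>"
    using False assms(3) by (simp add: field_simps)
  moreover have "0 < 1 / r" using assms(3) by simp
  ultimately have "ln (1 / r) < ln (norm f * opnorm g * norm v / \<bar>f \<bullet> ?y\<bar>)"
    by (simp add: ln_less_cancel_iff less_trans[of 0 "1 / r"])
  moreover have "ln (1 / r) = \<bar>ln r\<bar>" using assms(3,4) by (simp add: ln_div)
  ultimately show ?thesis unfolding small_coeff_def by simp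
qed (simp add: small_coeff_def)

lemma proper_subspace_orthogonal_nonzero:
  fixes V :: "(real^'n::finite) set"
  assumes "subspace V" "V \<noteq> UNIV"
  shows "\<exists>f. f \<noteq> 0 \<and> (\<forall>w\<in>V. f \<bullet> w = 0)"
proof -
  have "span V = V" using assms(1) by (simp add: span_eq_iff)
  then have "dim V \<noteq> DIM(real^'n)" using assms(2) dim_eq_full[of V] by argo
  then have "dim V < DIM(real^'n)" using dim_subset_UNIV[of V] by linarith
  then show ?thesis
    using orthogonal_to_subspace_exists[of V] span_base[of _ V] unfolding orthogonal_def by metis
qed

section \<open>Mass of neighbourhoods under a stationary measure\<close>

lemma measure_nbhd_le_small_coeff:
  fixes \<nu> :: "(real^'n::finite^'n) measure" and \<xi> :: "(real^'n) set measure"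
  assumes \<nu>: "prob_GL \<nu>" and \<xi>: "prob_space \<xi>" "sets \<xi> = sets proj_space" "stationary \<nu> \<xi>"
    and r: "0 < r" "r \<le> 1" and f: "f \<noteq> 0" "\<And>w. w \<in> V \<Longrightarrow> f \<bullet> w = 0"
    and bound: "\<And>v. v \<noteq> 0 \<Longrightarrow> measure (conv_pow \<nu> n) (small_coeff f v \<bar>ln r\<bar>) \<le> B"
  shows "measure \<xi> (nbhd V r) \<le> B"
proof -
  let ?M = "conv_pow \<nu> n" and ?A = "nbhd V r"
  interpret \<xi>: prob_space \<xi> by (rule \<xi>(1))
  interpret M: prob_space ?M
    using \<nu> prob_space_conv_pow unfolding prob_GL_def by blast
  have "axis undefined 1 \<noteq> (0 :: real^'n)" by (simp add: axis_eq_0_iff)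
  then have "0 \<le> B" using bound measure_nonneg order_trans by blast
  have "emeasure \<xi> ?A = (\<integral>\<^sup>+ l. indicator ?A l \<partial>\<xi>)"
    by (rule nn_integral_indicator[symmetric]) (simp add: \<xi>(2) sets_nbhd)
  also have "\<dots> = (\<integral>\<^sup>+ l. \<integral>\<^sup>+ g. indicator ?A (pact g l) \<partial>?M \<partial>\<xi>)"
    by (intro nn_integral_conv_pow_stationary[symmetric, OF \<nu> \<xi>] borel_measurable_indicator
        sets_nbhd)
  also have "\<dots> \<le> (\<integral>\<^sup>+ l. ennreal B \<partial>\<xi>)"
  proof (rule nn_integral_mono)
    fix l assume "l \<in> space \<xi>"
    then have "l \<in> Pspace" using space_eq_Pspace[OF \<xi>(2)] by simp
    then obtain v where v: "v \<noteq> 0" "line v = l" using proj_rep_in_Pspace by blast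
    have "(\<integral>\<^sup>+ g. indicator ?A (pact g l) \<partial>?M) \<le> (\<integral>\<^sup>+ g. indicator (small_coeff f v \<bar>ln r\<bar>) g \<partial>?M)"
      using AE_conv_pow_invertible[OF \<nu>, of n]
    proof (rule nn_integral_mono_AE[OF AE_mp[OF _ AE_I2]], intro impI)
      fix g :: "real^'n^'n" assume "invertible g"
      then show "indicator ?A (pact g l) \<le> (indicator (small_coeff f v \<bar>ln r\<bar>) g :: ennreal)"
        using pact_in_nbhd_imp_small_coeff[OF f(2,1) r v(1)] v(2) by (auto split: split_indicator)
    qed
    also have "\<dots> = ennreal (measure ?M (small_coeff f v \<bar>ln r\<bar>))"
      by (simp add: sets_conv_pow sets_small_coeff M.emeasure_eq_measure)
    also have "\<dots> \<le> ennreal B" using bound[OF v(1)] by (rule ennreal_leI)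
    finally show "(\<integral>\<^sup>+ g. indicator ?A (pact g l) \<partial>?M) \<le> ennreal B" .
  qed
  also have "\<dots> = ennreal B" by (simp add: \<xi>.emeasure_space_1)
  finally show ?thesis using \<open>0 \<le> B\<close> by (simp add: \<xi>.emeasure_eq_measure)
qed

lemma measure_nbhd_le_of_exp_decay:
  fixes \<nu> :: "(real^'n::finite^'n) measure" and \<xi> :: "(real^'n) set measure"
  assumes \<nu>: "prob_GL \<nu>" and \<xi>: "prob_space \<xi>" "sets \<xi> = sets proj_space" "stationary \<nu> \<xi>"
    and "\<beta> > 0" and V: "subspace V" "V \<noteq> UNIV" and r: "0 < r" "r \<le> 1"
    and bound: "\<And>f v n. f \<noteq> 0 \<Longrightarrow> v \<noteq> 0 \<Longrightarrow>
      measure (conv_pow \<nu> n) (small_coeff f v \<bar>ln r\<bar>) \<le> C * exp (- \<beta> * real n) + Z"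
  shows "measure \<xi> (nbhd V r) \<le> Z"
proof -
  obtain f :: "real^'n" where "f \<noteq> 0" "\<And>w. w \<in> V \<Longrightarrow> f \<bullet> w = 0"
    using proper_subspace_orthogonal_nonzero[OF V] by blast
  then have "measure \<xi> (nbhd V r) \<le> C * exp (- \<beta> * real n) + Z" for n
    using measure_nbhd_le_small_coeff[OF \<nu> \<xi> r] bound by blast
  moreover have "(\<lambda>n. C * exp (- \<beta> * real n) + Z) \<longlonglongrightarrow> C * 0 + Z"
  proof (intro tendsto_intros)
    have "(\<lambda>n. exp (- \<beta>) ^ n) \<longlonglongrightarrow> 0" using \<open>\<beta> > 0\<close> by (intro LIMSEQ_power_zero) simp
    then show "(\<lambda>n. exp (- \<beta> * real n)) \<longlonglongrightarrow> 0" by (simp add: exp_of_nat_mult[symmetric] mult.commute)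
  qed
  ultimately show ?thesis
    by (intro LIMSEQ_le_const[where X = "\<lambda>n. C * exp (- \<beta> * real n) + Z"]) auto
qed

definition zeta_series :: "real \<Rightarrow> real \<Rightarrow> 'n::finite mtx measure \<Rightarrow> real \<Rightarrow> real" where
  "zeta_series C \<beta> \<nu> t = (\<Sum>k. C * exp (- \<beta> * real (Suc k)) * Ntail \<nu> (t / real (Suc k)))"

lemma summable_powr_mult_exp:
  fixes \<beta> p :: real
  assumes "\<beta> > 0"
  shows "summable (\<lambda>k. real (Suc k) powr p * exp (- \<beta> * real (Suc k)))"
proof (rule ratio_test_convergence)
  have "(\<lambda>k. real (Suc k) / real (Suc (Suc k))) \<longlonglongrightarrow> 1"
    using LIMSEQ_Suc[OF LIMSEQ_n_over_Suc_n] by simp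
  then have "(\<lambda>k. (real (Suc k) / real (Suc (Suc k))) powr p * exp \<beta>) \<longlonglongrightarrow> 1 powr p * exp \<beta>"
    by (intro tendsto_intros) auto
  moreover have "real (Suc k) powr p * exp (- \<beta> * real (Suc k)) /
      (real (Suc (Suc k)) powr p * exp (- \<beta> * real (Suc (Suc k))))
    = (real (Suc k) / real (Suc (Suc k))) powr p * exp \<beta>" for k
    by (simp add: powr_divide exp_minus field_simps flip: exp_add)
  ultimately have "liminf (\<lambda>k. ereal (real (Suc k) powr p * exp (- \<beta> * real (Suc k)) /
      (real (Suc (Suc k)) powr p * exp (- \<beta> * real (Suc (Suc k)))))) = ereal (exp \<beta>)"
    by (intro lim_imp_Liminf) (simp_all add: tendsto_ereal)
  then show "liminf (\<lambda>k. ereal (real (Suc k) powr p * exp (- \<beta> * real (Suc k)) /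
      (real (Suc (Suc k)) powr p * exp (- \<beta> * real (Suc (Suc k)))))) > 1"
    using assms by simp
qed simp

lemma Ntail_nonneg: "0 \<le> Ntail \<nu> t"
  unfolding Ntail_def by simp

lemma Ntail_le_1: "prob_space \<nu> \<Longrightarrow> Ntail \<nu> t \<le> 1"
  unfolding Ntail_def by (rule prob_space.prob_le_1)

lemma summable_zeta_series:
  assumes "prob_space \<nu>" "\<beta> > 0"
  shows "summable (\<lambda>k. C * exp (- \<beta> * real (Suc k)) * Ntail \<nu> (t / real (Suc k)))"
proof (rule summable_comparison_test'[where N = 0])
  show "summable (\<lambda>k. \<bar>C\<bar> * exp (- \<beta> * real (Suc k)))"
    using summable_powr_mult_exp[OF assms(2), of 0] by (intro summable_mult) simp
  show "norm (C * exp (- \<beta> * real (Suc k)) * Ntail \<nu> (t / real (Suc k)))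
      \<le> \<bar>C\<bar> * exp (- \<beta> * real (Suc k))" for k
    by (simp add: abs_mult abs_of_nonneg[OF Ntail_nonneg] mult_left_le Ntail_le_1[OF assms(1)])
qed

lemma zeta_series_le_powr:
  assumes "prob_space \<nu>" "\<beta> > 0" "C \<ge> 0" "t > 0"
    and M: "\<And>s. s \<ge> 0 \<Longrightarrow> s powr p * Ntail \<nu> s \<le> M"
  shows "zeta_series C \<beta> \<nu> t
    \<le> C * M * (\<Sum>k. real (Suc k) powr p * exp (- \<beta> * real (Suc k))) * t powr (- p)"
proof -
  let ?a = "\<lambda>k. real (Suc k) powr p * exp (- \<beta> * real (Suc k))"
  have "C * exp (- \<beta> * real (Suc k)) * Ntail \<nu> (t / real (Suc k)) \<le> (C * M * t powr (- p)) * ?a k"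
    for k
  proof -
    have "(t / real (Suc k)) powr p * Ntail \<nu> (t / real (Suc k)) \<le> M"
      using assms(4) by (intro M) simp
    then have "Ntail \<nu> (t / real (Suc k)) \<le> M * real (Suc k) powr p * t powr (- p)"
      using assms(4) by (simp add: powr_divide powr_minus field_simps)
    then show ?thesis
      using assms(3) by (simp add: mult_left_mono mult_ac)
  qed
  then have "zeta_series C \<beta> \<nu> t \<le> (\<Sum>k. (C * M * t powr (- p)) * ?a k)"
    unfolding zeta_series_def
    using summable_zeta_series[OF assms(1,2)] summable_powr_mult_exp[OF assms(2)]
    by (intro suminf_le summable_mult) auto
  also have "\<dots> = C * M * (\<Sum>k. ?a k) * t powr (- p)"
    using summable_powr_mult_exp[OF assms(2)] by (simp add: suminf_mult mult_ac)
  finally show ?thesis .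
qed

lemma measure_nbhd_le_ln_powr:
  fixes \<nu> :: "(real^'n::finite^'n) measure" and \<xi> :: "(real^'n) set measure"
  assumes "prob_space \<nu>" "\<beta> > 0" "C \<ge> 0" and M: "\<And>t. t \<ge> 0 \<Longrightarrow> t powr p * Ntail \<nu> t \<le> M"
    and zeta: "\<And>V r. subspace V \<Longrightarrow> V \<noteq> UNIV \<Longrightarrow> 0 < r \<Longrightarrow> r \<le> 1 \<Longrightarrow>
      measure \<xi> (nbhd V r) \<le> zeta_series C \<beta> \<nu> \<bar>ln r\<bar>"
  shows "\<exists>C'. \<forall>V r. subspace V \<and> V \<noteq> UNIV \<and> 0 < r \<and> r < 1 \<longrightarrow>
    measure \<xi> (nbhd V r) \<le> C' * \<bar>ln r\<bar> powr (- p)"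
proof (intro exI allI impI, elim conjE)
  fix V :: "(real^'n) set" and r :: real
  assume "subspace V" "V \<noteq> UNIV" "0 < r" "r < 1"
  then have "measure \<xi> (nbhd V r) \<le> zeta_series C \<beta> \<nu> \<bar>ln r\<bar>" by (intro zeta) auto
  also have "\<dots> \<le> C * M * (\<Sum>k. real (Suc k) powr p * exp (- \<beta> * real (Suc k))) * \<bar>ln r\<bar> powr (- p)"
    using \<open>0 < r\<close> \<open>r < 1\<close> by (intro zeta_series_le_powr[OF assms(1-3) _ M]) simp
  finally show "measure \<xi> (nbhd V r) \<le> \<dots>" .
qed

lemma suminf_of_bool_less_le:
  fixes X :: real
  shows "(\<Sum>j. of_bool (real j < X) :: ennreal) \<le> ennreal (1 + X)"
proof (cases "X \<ge> 0")
  case True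
  have sub: "{j. real j < X} \<subseteq> {..< nat \<lceil>X\<rceil>}"
    by (auto simp: zless_nat_eq_int_zless less_ceiling_iff)
  then have "(\<Sum>j. of_bool (real j < X) :: ennreal) = of_nat (card {j. real j < X})"
    by (subst suminf_finite[of "{j. real j < X}"]) (auto intro: finite_subset)
  also have "\<dots> \<le> of_nat (nat \<lceil>X\<rceil>)" using card_mono[OF _ sub] by simp
  also have "\<dots> \<le> ennreal (1 + X)"
    unfolding ennreal_of_nat_eq_real_of_nat using True by (intro ennreal_leI) linarith
  finally show ?thesis .
qed simp

lemma suminf_of_bool_powr_less_le:
  fixes N p q :: real
  assumes p: "p > 0" and q: "q > 0"
  shows "(\<Sum>j. of_bool (real j powr (1 / p) / q < N) :: ennreal) \<le> ennreal (1 + q powr p * N powr p)"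
proof (cases "N > 0")
  case True
  have "real j powr (1 / p) < q * N \<longleftrightarrow> real j < (q * N) powr p" for j
  proof
    assume "real j powr (1 / p) < q * N"
    then have "(real j powr (1 / p)) powr p < (q * N) powr p"
      using p by (intro powr_less_mono2) auto
    then show "real j < (q * N) powr p" using p by (simp add: powr_powr)
  next
    assume "real j < (q * N) powr p"
    then have "real j powr (1 / p) < ((q * N) powr p) powr (1 / p)"
      using p by (intro powr_less_mono2) auto
    then show "real j powr (1 / p) < q * N" using p q True by (simp add: powr_powr)
  qed
  then have "real j powr (1 / p) / q < N \<longleftrightarrow> real j < q powr p * N powr p" for j
    using q True by (simp add: pos_divide_less_eq mult.commute powr_mult)
  then show ?thesis using suminf_of_bool_less_le[of "q powr p * N powr p"] by simp
next
  case False
  have "0 \<le> real j powr (1 / p) / q" for j using q by simp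
  with False have "\<not> real j powr (1 / p) / q < N" for j by (meson less_le_trans not_less)
  then show ?thesis by simp
qed

lemma suminf_Ntail_le:
  fixes \<nu> :: "(real^'n::finite^'n) measure"
  assumes \<nu>: "prob_space \<nu>" "sets \<nu> = sets borel" and "p > 0" "q > 0"
  shows "(\<Sum>j. ennreal (Ntail \<nu> (real j powr (1 / p) / q)))
    \<le> 1 + ennreal (q powr p) * (\<integral>\<^sup>+ g. ennreal (Nfun g powr p) \<partial>\<nu>)"
proof -
  interpret prob_space \<nu> by (rule \<nu>(1))
  note [measurable_cong] = \<nu>(2)
  have "ennreal (Ntail \<nu> s) = (\<integral>\<^sup>+ g. indicator {g \<in> space \<nu>. s < Nfun g} g \<partial>\<nu>)" for s
    by (simp add: Ntail_def emeasure_eq_measure)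
  then have "(\<Sum>j. ennreal (Ntail \<nu> (real j powr (1 / p) / q)))
      = (\<integral>\<^sup>+ g. (\<Sum>j. indicator {g \<in> space \<nu>. real j powr (1 / p) / q < Nfun g} g) \<partial>\<nu>)"
    by (simp add: nn_integral_suminf)
  also have "\<dots> \<le> (\<integral>\<^sup>+ g. ennreal (1 + q powr p * Nfun g powr p) \<partial>\<nu>)"
    using suminf_of_bool_powr_less_le[OF assms(3,4)]
    by (intro nn_integral_mono) (simp add: indicator_def)
  also have "\<dots> = 1 + ennreal (q powr p) * (\<integral>\<^sup>+ g. ennreal (Nfun g powr p) \<partial>\<nu>)"
    by (simp add: ennreal_plus ennreal_mult nn_integral_add nn_integral_cmult emeasure_space_1)
  finally show ?thesis .
qed

lemma ennreal_suminf_suminf_commute: "(\<Sum>j. \<Sum>k. f j k :: ennreal) = (\<Sum>k. \<Sum>j. f j k)"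
proof -
  have "(\<Sum>j. \<Sum>k. f j k) = (\<Sum>j. \<integral>\<^sup>+ k. f j k \<partial>count_space UNIV)"
    by (simp add: nn_integral_count_space_nat)
  also have "\<dots> = (\<integral>\<^sup>+ k. (\<Sum>j. f j k) \<partial>count_space UNIV)"
    by (rule nn_integral_suminf[symmetric]) simp
  also have "\<dots> = (\<Sum>k. \<Sum>j. f j k)" by (simp add: nn_integral_count_space_nat)
  finally show ?thesis .
qed

lemma suminf_zeta_series_less_top:
  fixes \<nu> :: "(real^'n::finite^'n) measure"
  assumes \<nu>: "prob_space \<nu>" "sets \<nu> = sets borel" and "\<beta> > 0" "C \<ge> 0" "p > 0"
    and moment: "(\<integral>\<^sup>+ g. ennreal (Nfun g powr p) \<partial>\<nu>) < \<infinity>"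
  shows "(\<Sum>j. ennreal (zeta_series C \<beta> \<nu> (real j powr (1 / p)))) < \<infinity>"
proof -
  define a where "a k = C * exp (- \<beta> * real (Suc k))" for k
  have a: "0 \<le> a k" for k unfolding a_def using assms(4) by simp
  have "(\<Sum>j. ennreal (zeta_series C \<beta> \<nu> (real j powr (1 / p))))
      = (\<Sum>j. \<Sum>k. ennreal (a k * Ntail \<nu> (real j powr (1 / p) / real (Suc k))))"
    unfolding zeta_series_def a_def
    by (intro suminf_cong suminf_ennreal2[symmetric] summable_zeta_series[OF \<nu>(1) assms(3)])
      (simp add: Ntail_nonneg assms(4))
  also have "\<dots> = (\<Sum>k. ennreal (a k) * (\<Sum>j. ennreal (Ntail \<nu> (real j powr (1 / p) / real (Suc k)))))"
    using a by (simp add: ennreal_suminf_suminf_commute ennreal_mult Ntail_nonneg)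
  also have "\<dots> \<le> (\<Sum>k. ennreal (a k) * (1 + ennreal (real (Suc k) powr p) *
      (\<integral>\<^sup>+ g. ennreal (Nfun g powr p) \<partial>\<nu>)))"
    using suminf_Ntail_le[OF \<nu> assms(5)] by (intro suminf_le mult_left_mono) auto
  also have "\<dots> = (\<Sum>k. ennreal (a k) + ennreal (a k * real (Suc k) powr p) *
      (\<integral>\<^sup>+ g. ennreal (Nfun g powr p) \<partial>\<nu>))"
    using a by (simp add: distrib_left ennreal_mult mult_ac)
  also have "\<dots> = (\<Sum>k. ennreal (a k)) +
      (\<Sum>k. ennreal (a k * real (Suc k) powr p)) * (\<integral>\<^sup>+ g. ennreal (Nfun g powr p) \<partial>\<nu>)"
    by (subst suminf_add[symmetric]) auto
  also have "\<dots> < \<infinity>"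
  proof -
    have "summable (\<lambda>k. exp (- \<beta> * real (Suc k)))"
      using summable_powr_mult_exp[OF assms(3), of 0] by simp
    then have "summable a" unfolding a_def by (rule summable_mult)
    moreover have "summable (\<lambda>k. a k * real (Suc k) powr p)"
      using summable_mult[OF summable_powr_mult_exp[OF assms(3)], of C] by (simp add: a_def mult_ac)
    ultimately show ?thesis
      using moment a ennreal_suminf_neq_top by (simp add: ennreal_mult_less_top less_top)
  qed
  finally show ?thesis .
qed

section \<open>Logarithmic moments of the distance to a subspace\<close>

lemma dist_PV_cases:
  fixes V :: "(real^'n::finite) set"
  assumes "subspace V" "V \<noteq> {0}"
  obtains d where "dist_PV V l = ereal d" "0 \<le> d" "d \<le> 1"
proof -
  obtain v where v: "v \<in> V" "v \<noteq> 0" using assms subspace_0[OF assms(1)] by blast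
  have "dist_PV V l \<le> ereal (pdist (line v) l)"
    unfolding dist_PV_def using v by (intro INF_lower) auto
  also have "\<dots> \<le> 1" using vdist_le_1 by (simp add: pdist_def)
  finally have "dist_PV V l \<le> 1" .
  moreover have "0 \<le> dist_PV V l"
    unfolding dist_PV_def by (intro INF_greatest) (simp add: vdist_nonneg pdist_def)
  ultimately show ?thesis using that by (cases "dist_PV V l") auto
qed

definition log_dist_powr :: "real \<Rightarrow> (real^'n::finite) set \<Rightarrow> (real^'n) set \<Rightarrow> ennreal" where
  "log_dist_powr p V l =
     (case dist_PV V l of ereal d \<Rightarrow> (if d = 0 then \<infinity> else ennreal (\<bar>ln d\<bar> powr p)) | _ \<Rightarrow> \<infinity>)"

lemma log_dist_powr_le_suminf_indicator:
  fixes V :: "(real^'n::finite) set"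
  assumes V: "subspace V" "V \<noteq> {0}" and l: "l \<in> Pspace" and p: "p > 0"
  shows "log_dist_powr p V l \<le> (\<Sum>j. indicator (nbhd V (exp (- (real j powr (1 / p))))) l)"
proof -
  obtain d where d: "dist_PV V l = ereal d" "0 \<le> d" "d \<le> 1" using dist_PV_cases[OF V] .
  have mem: "l \<in> nbhd V r \<longleftrightarrow> d < r" for r unfolding nbhd_def using l d(1) by simp
  show ?thesis
  proof (cases "d = 0")
    case True
    then have "(\<Sum>j. indicator (nbhd V (exp (- (real j powr (1 / p))))) l) = (\<Sum>j::nat. ennreal 1)"
      using mem by simp
    also have "\<dots> = \<infinity>" by (subst summable_iff_suminf_neq_top) (auto simp: summable_const_iff)
    finally show ?thesis by simp
  next
    case False
    then have "d > 0" using d(2) by simp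
    have "indicator (nbhd V (exp (- (real j powr (1 / p))))) l = (1::ennreal)"
      if "j < nat \<lceil>\<bar>ln d\<bar> powr p\<rceil>" for j
    proof -
      have "real j < \<bar>ln d\<bar> powr p" using that by linarith
      then have "real j powr (1 / p) < (\<bar>ln d\<bar> powr p) powr (1 / p)"
        using p by (intro powr_less_mono2) auto
      also have "\<dots> = - ln d" using p \<open>d > 0\<close> d(3) by (simp add: powr_powr)
      finally have "exp (ln d) < exp (- (real j powr (1 / p)))" by simp
      then show ?thesis using mem \<open>d > 0\<close> by simp
    qed
    then have "ennreal (\<bar>ln d\<bar> powr p)
        \<le> (\<Sum>j < nat \<lceil>\<bar>ln d\<bar> powr p\<rceil>. indicator (nbhd V (exp (- (real j powr (1 / p))))) l)"
      by (simp add: ennreal_of_nat_eq_real_of_nat ennreal_leI)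
    also have "\<dots> \<le> (\<Sum>j. indicator (nbhd V (exp (- (real j powr (1 / p))))) l)"
      by (rule sum_le_suminf) auto
    finally show ?thesis using d(1) False by (simp add: log_dist_powr_def)
  qed
qed

lemma nn_integral_log_dist_powr_le:
  fixes V :: "(real^'n::finite) set"
  assumes "sets \<xi> = sets proj_space" "subspace V" "V \<noteq> {0}" "p > 0"
  shows "(\<integral>\<^sup>+ l. log_dist_powr p V l \<partial>\<xi>) \<le> (\<Sum>j. emeasure \<xi> (nbhd V (exp (- (real j powr (1 / p))))))"
proof -
  have sets: "nbhd V r \<in> sets \<xi>" for r using assms(1) sets_nbhd by simp
  have "(\<integral>\<^sup>+ l. log_dist_powr p V l \<partial>\<xi>)
      \<le> (\<integral>\<^sup>+ l. (\<Sum>j. indicator (nbhd V (exp (- (real j powr (1 / p))))) l) \<partial>\<xi>)"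
    using log_dist_powr_le_suminf_indicator[OF assms(2,3) _ assms(4)] space_eq_Pspace[OF assms(1)]
    by (intro nn_integral_mono) auto
  also have "\<dots> = (\<Sum>j. emeasure \<xi> (nbhd V (exp (- (real j powr (1 / p))))))"
    using sets by (simp add: nn_integral_suminf borel_measurable_indicator)
  finally show ?thesis .
qed

lemma nn_integral_log_dist_powr_bounded:
  fixes \<nu> :: "(real^'n::finite^'n) measure" and \<xi> :: "(real^'n) set measure"
  assumes \<nu>: "prob_space \<nu>" "sets \<nu> = sets borel" and \<xi>: "prob_space \<xi>" "sets \<xi> = sets proj_space"
    and "\<beta> > 0" "C \<ge> 0" "p > 0" and moment: "(\<integral>\<^sup>+ g. ennreal (Nfun g powr p) \<partial>\<nu>) < \<infinity>"
    and zeta: "\<And>V r. subspace V \<Longrightarrow> V \<noteq> UNIV \<Longrightarrow> 0 < r \<Longrightarrow> r \<le> 1 \<Longrightarrow>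
      measure \<xi> (nbhd V r) \<le> zeta_series C \<beta> \<nu> \<bar>ln r\<bar>"
  shows "\<exists>C'. \<forall>V. subspace V \<and> V \<noteq> UNIV \<and> V \<noteq> {0} \<longrightarrow>
    (\<integral>\<^sup>+ l. log_dist_powr p V l \<partial>\<xi>) \<le> ennreal C'"
proof -
  interpret \<xi>: prob_space \<xi> by (rule \<xi>(1))
  obtain C' where C': "(\<Sum>j. ennreal (zeta_series C \<beta> \<nu> (real j powr (1 / p)))) = ennreal C'"
    using suminf_zeta_series_less_top[OF \<nu> assms(5-8)] by (auto simp: less_top_ennreal)
  have "(\<integral>\<^sup>+ l. log_dist_powr p V l \<partial>\<xi>) \<le> ennreal C'"
    if V: "subspace V" "V \<noteq> UNIV" "V \<noteq> {0}" for V
  proof -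
    have "emeasure \<xi> (nbhd V (exp (- x))) \<le> ennreal (zeta_series C \<beta> \<nu> x)" if "x \<ge> 0" for x
      using zeta[OF V(1,2), of "exp (- x)"] that
      by (simp add: \<xi>.emeasure_eq_measure ennreal_leI)
    then have "(\<Sum>j. emeasure \<xi> (nbhd V (exp (- (real j powr (1 / p))))))
        \<le> (\<Sum>j. ennreal (zeta_series C \<beta> \<nu> (real j powr (1 / p))))"
      by (intro suminf_le) auto
    with nn_integral_log_dist_powr_le[OF \<xi>(2) V(1,3) \<open>p > 0\<close>] C' show ?thesis by simp
  qed
  then show ?thesis by blast
qed

theorem corollary1p14:
  fixes \<nu> :: "(real^'n::finite^'n) measure"
    and \<xi> :: "(real^'n) set measure"
    and C \<beta> :: real
  assumes dim: "CARD('n) \<ge> 2"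
    and nu: "prob_GL \<nu>"
    and si: "strongly_irreducible \<nu>"
    and prox: "proximal \<nu>"
    and C: "C > 0" and beta: "\<beta> > 0"
    and hyp: "\<And>(f::real^'n) (v::real^'n) (n::nat) (t::real).
       f \<noteq> 0 \<Longrightarrow> v \<noteq> 0 \<Longrightarrow> t \<ge> 0 \<Longrightarrow>
       measure (conv_pow \<nu> n)
         {g. f \<bullet> (g *v v) = 0 \<or>
             ln (norm f * opnorm g * norm v / \<bar>f \<bullet> (g *v v)\<bar>) > t}
       \<le> C * exp (- \<beta> * real n)
          + (\<Sum>k. C * exp (- \<beta> * real (Suc k)) * Ntail \<nu> (t / real (Suc k)))"
    and xi: "prob_space \<xi>" "sets \<xi> = sets proj_space" "stationary \<nu> \<xi>"
  shows
    "(\<forall>V r. subspace V \<and> V \<noteq> UNIV \<and> 0 < r \<and> r \<le> 1 \<longrightarrow>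
        measure \<xi> (nbhd V r) \<le> zeta_tail C \<beta> \<nu> \<bar>ln r\<bar>)
     \<and> (\<forall>p>0. (\<integral>\<^sup>+ g. ennreal (Nfun g powr p) \<partial>\<nu>) < \<infinity> \<longrightarrow>
         (\<exists>C'. \<forall>V. subspace V \<and> V \<noteq> UNIV \<and> V \<noteq> {0} \<longrightarrow>
            (\<integral>\<^sup>+ l. (case dist_PV V l of
                        ereal d \<Rightarrow> (if d = 0 then \<infinity> else ennreal (\<bar>ln d\<bar> powr p))
                      | _ \<Rightarrow> \<infinity>) \<partial>\<xi>) \<le> ennreal C'))
     \<and> (\<forall>p>0. (\<exists>M. \<forall>t\<ge>0. t powr p * Ntail \<nu> t \<le> M) \<longrightarrow>
         (\<exists>C'. \<forall>V r. subspace V \<and> V \<noteq> UNIV \<and> 0 < r \<and> r < 1 \<longrightarrow>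
            measure \<xi> (nbhd V r) \<le> C' * \<bar>ln r\<bar> powr (- p)))"
proof -
  have \<nu>: "prob_space \<nu>" "sets \<nu> = sets borel" using nu unfolding prob_GL_def by auto
  have zeta: "measure \<xi> (nbhd V r) \<le> zeta_series C \<beta> \<nu> \<bar>ln r\<bar>"
    if "subspace V" "V \<noteq> UNIV" "0 < r" "r \<le> 1" for V r
  proof (rule measure_nbhd_le_of_exp_decay[OF nu xi beta that])
    fix f v :: "real^'n" and n assume "f \<noteq> 0" "v \<noteq> 0"
    then show "measure (conv_pow \<nu> n) (small_coeff f v \<bar>ln r\<bar>)
        \<le> C * exp (- \<beta> * real n) + zeta_series C \<beta> \<nu> \<bar>ln r\<bar>"
      unfolding small_coeff_def zeta_series_def by (rule hyp) simp
  qed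
  then have "\<forall>V r. subspace V \<and> V \<noteq> UNIV \<and> 0 < r \<and> r \<le> 1 \<longrightarrow>
      measure \<xi> (nbhd V r) \<le> zeta_tail C \<beta> \<nu> \<bar>ln r\<bar>"
    using prob_space.prob_le_1[OF xi(1)] by (simp add: zeta_tail_def zeta_series_def)
  with nn_integral_log_dist_powr_bounded[OF \<nu> xi(1,2) beta less_imp_le[OF C] _ _ zeta]
    measure_nbhd_le_ln_powr[OF \<nu>(1) beta less_imp_le[OF C] _ zeta]
  show ?thesis unfolding log_dist_powr_def by blast
qed

end
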